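(* Let $A$ be a biflat Banach algebra and $\phi\in\Delta(A)$. Then $A$ is approximately left $\phi$-biprojective.
   Context: $\Delta(A)$ is the set of characters of $A$; $A\otimes_pA$ is the projective tensor product with $a\cdot(b\otimes c)=ab\otimes c$, $(b\otimes c)\cdot a=b\otimes ca$, $\pi_A(a\otimes b)=ab$. $A$ is biflat if there is a bounded $A$-bimodule morphism $\rho:A\to(A\otimes_pA)^{**}$ such that $\pi_A^{**}\circ\rho$ is the canonical embedding of $A$ into $A^{**}$. $A$ is approximately left $\phi$-biprojective if there is a net $(\rho_\alpha)$ of bounded linear maps $A\to A\otimes_pA$ such that for all $a,x\in A$: $\|a\cdot\rho_\alpha(x)-\rho_\alpha(ax)\|\to0$, $\|\rho_\alpha(xa)-\phi(a)\rho_\alpha(x)\|\to0$, and $\phi(\pi_A(\rho_\alpha(x)))-\phi(x)\to0$. *)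

theory Defs
  imports "HOL-Analysis.Analysis"
begin

text \<open>A complex Banach algebra is modelled as a real Banach algebra of type
  'a::{real_normed_algebra, banach} together with a real-linear map J
  (multiplication by the imaginary unit) compatible with norm and product.\<close>

definition complex_structure :: "('a::{real_normed_algebra,banach} \<Rightarrow> 'a) \<Rightarrow> bool" where
  "complex_structure J \<longleftrightarrow> linear J \<and> (\<forall>x. J (J x) = - x)
     \<and> (\<forall>x t. norm (cos t *\<^sub>R x + sin t *\<^sub>R J x) = norm x)
     \<and> (\<forall>x y. J (x * y) = J x * y \<and> J (x * y) = x * J y)"

definition cdual :: "('a::{real_normed_algebra,banach} \<Rightarrow> 'a) \<Rightarrow> ('a \<Rightarrow> complex) \<Rightarrow> bool" where
  "cdual J f \<longleftrightarrow> bounded_linear f \<and> (\<forall>x. f (J x) = \<i> * f x)"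

definition character :: "('a::{real_normed_algebra,banach} \<Rightarrow> 'a) \<Rightarrow> ('a \<Rightarrow> complex) \<Rightarrow> bool" where
  "character J \<phi> \<longleftrightarrow> cdual J \<phi> \<and> (\<forall>x y. \<phi> (x * y) = \<phi> x * \<phi> y) \<and> (\<exists>x. \<phi> x \<noteq> 0)"

text \<open>Bounded complex-bilinear forms on A x A; this Banach space is the dual (A \<otimes>_p A)*.\<close>
definition cbil :: "('a::{real_normed_algebra,banach} \<Rightarrow> 'a) \<Rightarrow> ('a \<Rightarrow> 'a \<Rightarrow> complex) \<Rightarrow> bool" where
  "cbil J B \<longleftrightarrow> bounded_bilinear B \<and> (\<forall>x y. B (J x) y = \<i> * B x y \<and> B x (J y) = \<i> * B x y)"

definition bnorm :: "('a::real_normed_vector \<Rightarrow> 'a \<Rightarrow> complex) \<Rightarrow> real" where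
  "bnorm B = Sup {cmod (B x y) | x y. norm x \<le> 1 \<and> norm y \<le> 1}"

text \<open>Elements of the bidual (A \<otimes>_p A)** = (cbil forms)*: bounded complex-linear functionals
  on the space of bounded complex-bilinear forms.\<close>
definition bidual :: "('a::{real_normed_algebra,banach} \<Rightarrow> 'a) \<Rightarrow> (('a \<Rightarrow> 'a \<Rightarrow> complex) \<Rightarrow> complex) \<Rightarrow> bool" where
  "bidual J F \<longleftrightarrow>
     (\<forall>B C. cbil J B \<longrightarrow> cbil J C \<longrightarrow> F (\<lambda>x y. B x y + C x y) = F B + F C)
   \<and> (\<forall>c B. cbil J B \<longrightarrow> F (\<lambda>x y. c * B x y) = c * F B)
   \<and> (\<exists>K. \<forall>B. cbil J B \<longrightarrow> cmod (F B) \<le> K * bnorm B)"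

text \<open>Elements of the projective tensor product A \<otimes>_p A, realised (via its canonical
  isometric embedding into its bidual) as the functionals B \<mapsto> \<Sum>n. B (a n) (b n)
  with \<Sum>n. norm (a n) * norm (b n) < \<infinity>.\<close>
definition ptensor :: "('a::{real_normed_algebra,banach} \<Rightarrow> 'a) \<Rightarrow> (('a \<Rightarrow> 'a \<Rightarrow> complex) \<Rightarrow> complex) \<Rightarrow> bool" where
  "ptensor J u \<longleftrightarrow> (\<exists>a b :: nat \<Rightarrow> 'a. summable (\<lambda>n. norm (a n) * norm (b n))
       \<and> (\<forall>B. cbil J B \<longrightarrow> u B = (\<Sum>n. B (a n) (b n))))"

text \<open>Projective norm = norm as a functional on the bilinear forms (isometric duality).\<close>
definition tnorm :: "('a::{real_normed_algebra,banach} \<Rightarrow> 'a) \<Rightarrow> (('a \<Rightarrow> 'a \<Rightarrow> complex) \<Rightarrow> complex) \<Rightarrow> real" where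
  "tnorm J u = Sup {cmod (u B) | B. cbil J B \<and> bnorm B \<le> 1}"

text \<open>Module actions on A \<otimes>_p A and its bidual, expressed on bilinear forms B:
  (a\<cdot>u)(B) = u(B(a*_,_)),  (u\<cdot>a)(B) = u(B(_,_*a)).\<close>
definition lact :: "'a::{real_normed_algebra,banach} \<Rightarrow> (('a \<Rightarrow> 'a \<Rightarrow> complex) \<Rightarrow> complex) \<Rightarrow> (('a \<Rightarrow> 'a \<Rightarrow> complex) \<Rightarrow> complex)" where
  "lact a u = (\<lambda>B. u (\<lambda>x y. B (a * x) y))"

definition ract :: "(('a::{real_normed_algebra,banach} \<Rightarrow> 'a \<Rightarrow> complex) \<Rightarrow> complex) \<Rightarrow> 'a \<Rightarrow> (('a \<Rightarrow> 'a \<Rightarrow> complex) \<Rightarrow> complex)" where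
  "ract u a = (\<lambda>B. u (\<lambda>x y. B x (y * a)))"

definition clin_map :: "('a::{real_normed_algebra,banach} \<Rightarrow> 'a) \<Rightarrow> ('a \<Rightarrow> (('a \<Rightarrow> 'a \<Rightarrow> complex) \<Rightarrow> complex)) \<Rightarrow> bool" where
  "clin_map J \<rho> \<longleftrightarrow> (\<forall>B. cbil J B \<longrightarrow>
      (\<forall>x y. \<rho> (x + y) B = \<rho> x B + \<rho> y B)
    \<and> (\<forall>r x. \<rho> (r *\<^sub>R x) B = of_real r * \<rho> x B)
    \<and> (\<forall>x. \<rho> (J x) B = \<i> * \<rho> x B))"

definition biflat :: "('a::{real_normed_algebra,banach} \<Rightarrow> 'a) \<Rightarrow> bool" where
  "biflat J \<longleftrightarrow> (\<exists>\<rho>. clin_map J \<rho> \<and> (\<forall>x. bidual J (\<rho> x))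
     \<and> (\<exists>K. \<forall>x B. cbil J B \<longrightarrow> cmod (\<rho> x B) \<le> K * norm x * bnorm B)
     \<and> (\<forall>a x B. cbil J B \<longrightarrow> \<rho> (a * x) B = lact a (\<rho> x) B)
     \<and> (\<forall>a x B. cbil J B \<longrightarrow> \<rho> (x * a) B = ract (\<rho> x) a B)
     \<and> (\<forall>a f. cdual J f \<longrightarrow> \<rho> a (\<lambda>x y. f (x * y)) = f a))"

text \<open>Approximately left phi-biprojective. The net (rho_alpha) is encoded as a proper filter F
  on the space of maps (the net's tail filter); phi(pi_A(u)) = u(\<lambda>x y. phi(x*y)).\<close>
definition approx_left_phi_biprojective ::
  "('a::{real_normed_algebra,banach} \<Rightarrow> 'a) \<Rightarrow> ('a \<Rightarrow> complex) \<Rightarrow> bool" where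
  "approx_left_phi_biprojective J \<phi> \<longleftrightarrow>
    (\<exists>F :: ('a \<Rightarrow> (('a \<Rightarrow> 'a \<Rightarrow> complex) \<Rightarrow> complex)) filter. F \<noteq> bot
      \<and> (\<forall>\<^sub>F \<rho> in F. clin_map J \<rho> \<and> (\<forall>x. ptensor J (\<rho> x))
            \<and> (\<exists>K. \<forall>x. tnorm J (\<rho> x) \<le> K * norm x))
      \<and> (\<forall>a x. ((\<lambda>\<rho>. tnorm J (\<lambda>B. lact a (\<rho> x) B - \<rho> (a * x) B)) \<longlongrightarrow> 0) F)
      \<and> (\<forall>a x. ((\<lambda>\<rho>. tnorm J (\<lambda>B. \<rho> (x * a) B - \<phi> a * \<rho> x B)) \<longlongrightarrow> 0) F)
      \<and> (\<forall>x. ((\<lambda>\<rho>. \<rho> x (\<lambda>u v. \<phi> (u * v)) - \<phi> x) \<longlongrightarrow> 0) F))"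

end

theory Submission
  imports Defs "HOL-Library.Function_Algebras"
begin

text \<open>
  Let \<open>\<rho>\<close> be the diagonal of the biflat algebra \<open>A\<close> and \<open>\<phi> e = 1\<close>. Given finitely many pairs
  \<open>(x\<^sub>i, a\<^sub>i)\<close> and \<open>\<epsilon> > 0\<close>, some \<open>c\<close> satisfies \<open>\<parallel>x\<^sub>i a\<^sub>i c - \<phi>(a\<^sub>i) x\<^sub>i c\<parallel> < \<epsilon>\<close> and
  \<open>|\<phi>(c) - 1| < \<epsilon>\<close>. Otherwise, by homogeneity, \<open>|\<phi>(c)| \<le> \<epsilon>\<^sup>-\<^sup>1 \<Sum>\<^sub>i \<parallel>D\<^sub>i c\<parallel>\<close> for the maps
  \<open>D\<^sub>i c = x\<^sub>i a\<^sub>i c - \<phi>(a\<^sub>i) x\<^sub>i c\<close>, and the Hahn--Banach theorem on the space of tuples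
  writes \<open>\<phi> = \<Sum>\<^sub>i f\<^sub>i \<circ> D\<^sub>i\<close> with \<open>f\<^sub>i \<in> A*\<close>. Since \<open>\<rho>\<close> is a bimodule map,
  \<open>\<rho>(e)((f\<^sub>i \<circ> D\<^sub>i) \<otimes> \<phi>) = \<rho>(x\<^sub>i a\<^sub>i)(f\<^sub>i \<otimes> \<phi>) - \<phi>(a\<^sub>i) \<rho>(x\<^sub>i)(f\<^sub>i \<otimes> \<phi>) = 0\<close>, whereas
  \<open>\<rho>(e)(\<phi> \<otimes> \<phi>) = \<phi>(e) = 1\<close>. These elements form a net \<open>(c\<^sub>\<alpha>)\<close>, and
  \<open>\<rho>\<^sub>\<alpha>(x) = x c\<^sub>\<alpha> \<otimes> e\<close> is an exact left module map, an approximate right \<open>\<phi>\<close>-module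
  map, and \<open>\<phi>(\<pi>(\<rho>\<^sub>\<alpha>(x))) = \<phi>(x) \<phi>(c\<^sub>\<alpha>) \<rightarrow> \<phi>(x)\<close>.
\<close>

section \<open>Sublinear functionals and the Hahn--Banach theorem\<close>

definition sublinear :: "('v::real_vector \<Rightarrow> real) \<Rightarrow> bool" where
  "sublinear p \<longleftrightarrow>
     (\<forall>x y. p (x + y) \<le> p x + p y) \<and> (\<forall>r x. 0 \<le> r \<longrightarrow> p (r *\<^sub>R x) = r * p x)"

lemma sublinear_add: "sublinear p \<Longrightarrow> p (x + y) \<le> p x + p y"
  unfolding sublinear_def by blast

lemma sublinear_scaleR: "sublinear p \<Longrightarrow> 0 \<le> r \<Longrightarrow> p (r *\<^sub>R x) = r * p x"
  unfolding sublinear_def by blast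

lemma sublinear_zero: "sublinear p \<Longrightarrow> p 0 = 0"
  using sublinear_scaleR[of p 0 0] by simp

lemma sublinear_minus_le: "sublinear p \<Longrightarrow> - p (- x) \<le> p x"
  using sublinear_add[of p x "- x"] sublinear_zero[of p] by simp

lemma sublinear_scaleR_ge:
  assumes p: "sublinear p"
  shows "r * p x \<le> p (r *\<^sub>R x)"
proof (cases "0 \<le> r")
  case True
  then show ?thesis using sublinear_scaleR[OF p] by simp
next
  case False
  have "r * p x = (- r) * (- p x)" by simp
  also have "\<dots> \<le> (- r) * p (- x)"
    using sublinear_minus_le[OF p, of "- x"] False by (intro mult_left_mono) auto
  also have "\<dots> = p (r *\<^sub>R x)"
    using sublinear_scaleR[OF p, of "- r" "- x"] False by simp
  finally show ?thesis .
qed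

lemma cINF_mult_left:
  fixes f :: "'i \<Rightarrow> real"
  assumes "0 \<le> r" "A \<noteq> {}" "bdd_below (f ` A)"
  shows "(INF a\<in>A. r * f a) = r * (INF a\<in>A. f a)"
proof -
  have "continuous (at_right (Inf (f ` A))) (\<lambda>x. r * x)"
    by (intro continuous_intros)
  then show ?thesis
    using continuous_at_Inf_mono[of "\<lambda>x. r * x" "f ` A"] assms
    by (simp add: image_image mono_def mult_left_mono)
qed

lemma le_cINF_add:
  fixes f g :: "'i \<Rightarrow> real"
  assumes A: "A \<noteq> {}" and B: "B \<noteq> {}" and le: "\<And>a b. a \<in> A \<Longrightarrow> b \<in> B \<Longrightarrow> t \<le> f a + g b"
  shows "t \<le> (INF a\<in>A. f a) + (INF b\<in>B. g b)"
proof -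
  have "t - g b \<le> (INF a\<in>A. f a)" if "b \<in> B" for b
    using A le[OF _ that] by (intro cINF_greatest) (auto simp: algebra_simps)
  then have "t - (INF a\<in>A. f a) \<le> (INF b\<in>B. g b)"
    using B by (intro cINF_greatest) (auto simp: algebra_simps)
  then show ?thesis by simp
qed

lemma sublinear_INF_chain:
  fixes C :: "('v::real_vector \<Rightarrow> real) set"
  assumes C: "C \<noteq> {}" and sub: "\<And>q. q \<in> C \<Longrightarrow> sublinear q"
    and chain: "\<And>q q'. q \<in> C \<Longrightarrow> q' \<in> C \<Longrightarrow> q \<le> q' \<or> q' \<le> q"
    and bdd: "\<And>x. bdd_below ((\<lambda>q. q x) ` C)"
  shows "sublinear (\<lambda>x. INF q\<in>C. q x)"
  unfolding sublinear_def
proof safe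
  fix x y
  have "(INF q\<in>C. q (x + y)) \<le> q x + q' y" if q: "q \<in> C" and q': "q' \<in> C" for q q'
  proof -
    have "(INF q\<in>C. q (x + y)) \<le> min (q (x + y)) (q' (x + y))"
      using cINF_lower[OF bdd q] cINF_lower[OF bdd q'] by simp
    also have "\<dots> \<le> q x + q' y"
      using chain[OF q q']
    proof
      assume "q \<le> q'"
      then have "q x + q y \<le> q x + q' y" by (simp add: le_fun_def)
      then show ?thesis using sublinear_add[OF sub[OF q], of x y] by linarith
    next
      assume "q' \<le> q"
      then have "q' x + q' y \<le> q x + q' y" by (simp add: le_fun_def)
      then show ?thesis using sublinear_add[OF sub[OF q'], of x y] by linarith
    qed
    finally show ?thesis .
  qed
  then show "(INF q\<in>C. q (x + y)) \<le> (INF q\<in>C. q x) + (INF q\<in>C. q y)"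
    using C by (intro le_cINF_add) auto
next
  fix r :: real and x
  assume r: "0 \<le> r"
  have "(INF q\<in>C. q (r *\<^sub>R x)) = (INF q\<in>C. r * q x)"
    using sub sublinear_scaleR r by (intro INF_cong) auto
  also have "\<dots> = r * (INF q\<in>C. q x)"
    using r C bdd by (rule cINF_mult_left)
  finally show "(INF q\<in>C. q (r *\<^sub>R x)) = r * (INF q\<in>C. q x)" .
qed

lemma bdd_below_translate:
  assumes p: "sublinear p" and dom: "\<And>c. h c \<le> p (T c)"
  shows "bdd_below (range (\<lambda>c. p (x + T c) - h c))"
proof (rule bdd_belowI2)
  fix c
  have "p (T c) \<le> p (x + T c) + p (- x)"
    using sublinear_add[OF p, of "x + T c" "- x"] by simp
  then show "- p (- x) \<le> p (x + T c) - h c"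
    using dom[of c] by simp
qed

lemma INF_translate_le:
  assumes "sublinear p" and "\<And>c. h c \<le> p (T c)"
  shows "(INF c. p (x + T c) - h c) \<le> p (x + T c) - h c"
  by (rule cINF_lower[OF bdd_below_translate[OF assms]]) simp

lemma sublinear_INF_translate:
  fixes p :: "'v::real_vector \<Rightarrow> real" and T :: "'b::real_vector \<Rightarrow> 'v"
  assumes p: "sublinear p" and T: "linear T" and h: "linear h" and dom: "\<And>c. h c \<le> p (T c)"
  shows "sublinear (\<lambda>x. INF c. p (x + T c) - h c)"
  unfolding sublinear_def
proof safe
  fix x y
  have "(INF c. p (x + y + T c) - h c) \<le> (p (x + T c) - h c) + (p (y + T d) - h d)" for c d
  proof -
    have "(INF c. p (x + y + T c) - h c) \<le> p (x + y + T (c + d)) - h (c + d)"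
      by (rule INF_translate_le[OF p dom])
    also have "\<dots> \<le> (p (x + T c) - h c) + (p (y + T d) - h d)"
      using sublinear_add[OF p, of "x + T c" "y + T d"]
      by (simp add: linear_add[OF T] linear_add[OF h] algebra_simps)
    finally show ?thesis .
  qed
  then show "(INF c. p (x + y + T c) - h c) \<le> (INF c. p (x + T c) - h c) + (INF c. p (y + T c) - h c)"
    by (intro le_cINF_add) auto
next
  fix r :: real and x
  assume r: "0 \<le> r"
  show "(INF c. p (r *\<^sub>R x + T c) - h c) = r * (INF c. p (x + T c) - h c)"
  proof (cases "r = 0")
    case True
    have "(INF c. p (T c) - h c) = 0"
      using dom by (intro cInf_eq_minimum)
        (auto simp: linear_0[OF T] linear_0[OF h] sublinear_zero[OF p] intro: rev_image_eqI[of 0])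
    then show ?thesis using True by simp
  next
    case False
    have "range (\<lambda>c::'b. r *\<^sub>R c) = UNIV"
      using False by (intro surjI[of _ "\<lambda>c. inverse r *\<^sub>R c"]) simp
    then have "(INF c. p (r *\<^sub>R x + T c) - h c)
        = (INF c\<in>range (\<lambda>c. r *\<^sub>R c). p (r *\<^sub>R x + T c) - h c)"
      by simp
    also have "\<dots> = (INF c. p (r *\<^sub>R x + T (r *\<^sub>R c)) - h (r *\<^sub>R c))"
      by (simp add: image_image)
    also have "\<dots> = (INF c. r * (p (x + T c) - h c))"
      using sublinear_scaleR[OF p r]
      by (simp add: linear_scale[OF T] linear_scale[OF h] scaleR_add_right[symmetric] right_diff_distrib)
    also have "\<dots> = r * (INF c. p (x + T c) - h c)"
      using r bdd_below_translate[OF p dom] by (intro cINF_mult_left) auto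
    finally show ?thesis .
  qed
qed

lemma linear_if_sublinear_minimal:
  fixes m :: "'v::real_vector \<Rightarrow> real"
  assumes m: "sublinear m" and minimal: "\<And>q. sublinear q \<Longrightarrow> q \<le> m \<Longrightarrow> q = m"
  shows "linear m"
proof -
  have superadditive: "m x + m v \<le> m (x + v)" for x v
  proof -
    \<comment> \<open>\<open>q y = inf\<^sub>t m (y + t v) - t m v\<close> is a sublinear minorant of \<open>m\<close>, hence equals \<open>m\<close>.\<close>
    define T where "T = (\<lambda>t::real. t *\<^sub>R v)"
    define h where "h = (\<lambda>t::real. t * m v)"
    define q where "q = (\<lambda>y. INF t. m (y + T t) - h t)"
    have dom: "h t \<le> m (T t)" for t
      unfolding T_def h_def by (rule sublinear_scaleR_ge[OF m])
    have "linear T" and "linear h"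
      unfolding T_def h_def by (simp_all add: bounded_linear.linear[OF bounded_linear_scaleR_left]
          bounded_linear.linear[OF bounded_linear_mult_left])
    then have "sublinear q"
      unfolding q_def by (rule sublinear_INF_translate[OF m _ _ dom])
    moreover have "q \<le> m"
      using INF_translate_le[of m h T _ 0, OF m dom] by (simp add: q_def T_def h_def le_fun_def)
    ultimately have "q = m" by (rule minimal)
    then have "m x = q x" by simp
    also have "\<dots> \<le> m (x + T 1) - h 1"
      unfolding q_def by (rule INF_translate_le[OF m dom])
    finally show ?thesis by (simp add: T_def h_def)
  qed
  have add: "m (x + y) = m x + m y" for x y
    using superadditive[of x y] sublinear_add[OF m, of x y] by simp
  have minus: "m (- x) = - m x" for x
    using add[of x "- x"] sublinear_zero[OF m] by simp
  have "m (r *\<^sub>R x) = r * m x" for r x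
    using sublinear_scaleR_ge[OF m, of r x] sublinear_scaleR_ge[OF m, of "- r" x] minus[of "r *\<^sub>R x"]
    by simp
  with add show ?thesis
    by (intro linearI) simp_all
qed

lemma bdd_below_sublinear_minorants:
  assumes sub: "\<And>q. q \<in> C \<Longrightarrow> sublinear q" and le_p: "\<And>q. q \<in> C \<Longrightarrow> q \<le> p"
  shows "bdd_below ((\<lambda>q. q x) ` C)"
proof (rule bdd_belowI2)
  fix q assume q: "q \<in> C"
  have "- q (- x) \<le> q x"
    using sub[OF q] by (rule sublinear_minus_le)
  moreover have "q (- x) \<le> p (- x)"
    using le_p[OF q] by (simp add: le_fun_def)
  ultimately show "- p (- x) \<le> q x"
    by linarith
qed

lemma sublinear_linear_minorant:
  fixes p :: "'v::real_vector \<Rightarrow> real"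
  assumes p: "sublinear p"
  obtains L where "linear L" and "\<And>x. L x \<le> p x"
proof -
  define A where "A = {q. sublinear q \<and> q \<le> p}"
  have "\<exists>m\<in>A. \<forall>q\<in>A. q \<le> m \<longrightarrow> q = m"
  proof (rule predicate_Zorn)
    show "partial_order_on A (relation_of (\<lambda>q q'. q' \<le> q) A)"
      by (auto simp: partial_order_on_def preorder_on_def refl_on_def trans_on_def
          antisym_on_def relation_of_def)
  next
    fix C
    assume "C \<in> Chains (relation_of (\<lambda>q q'. q' \<le> q) A)"
    then have CA: "C \<subseteq> A" and chain: "\<And>q q'. q \<in> C \<Longrightarrow> q' \<in> C \<Longrightarrow> q \<le> q' \<or> q' \<le> q"
      unfolding Chains_def relation_of_def by auto
    show "\<exists>u\<in>A. \<forall>q\<in>C. u \<le> q"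
    proof (cases "C = {}")
      case True
      then show ?thesis using p by (auto simp: A_def)
    next
      case False
      have sub: "\<And>q. q \<in> C \<Longrightarrow> sublinear q" and le_p: "\<And>q. q \<in> C \<Longrightarrow> q \<le> p"
        using CA by (auto simp: A_def)
      have bdd: "bdd_below ((\<lambda>q. q x) ` C)" for x
        using sub le_p by (rule bdd_below_sublinear_minorants)
      define u where "u = (\<lambda>x. INF q\<in>C. q x)"
      have below: "u \<le> q" if "q \<in> C" for q
        using cINF_lower[OF bdd that] by (simp add: u_def le_fun_def)
      have "sublinear u"
        unfolding u_def using False sub chain bdd by (rule sublinear_INF_chain)
      moreover obtain q where "q \<in> C" using False by blast
      then have "u \<le> p" using below le_p order_trans by blast
      ultimately show ?thesis using below by (auto simp: A_def)
    qed
  qed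
  then obtain m where "sublinear m" "m \<le> p" and "\<And>q. sublinear q \<Longrightarrow> q \<le> m \<Longrightarrow> q = m"
    unfolding A_def using order_trans by blast
  then show thesis
    using that linear_if_sublinear_minimal by (auto simp: le_fun_def)
qed

theorem hahn_banach_sublinear:
  fixes p :: "'v::real_vector \<Rightarrow> real" and T :: "'b::real_vector \<Rightarrow> 'v"
  assumes p: "sublinear p" and T: "linear T" and h: "linear h" and dom: "\<And>c. h c \<le> p (T c)"
  obtains L where "linear L" and "\<And>x. L x \<le> p x" and "\<And>c. L (T c) = h c"
proof -
  obtain L where L: "linear L" and L_le: "\<And>x. L x \<le> (INF c. p (x + T c) - h c)"
    using sublinear_linear_minorant[OF sublinear_INF_translate[OF p T h dom]] by blast
  have "L x \<le> p x" for x
    using order_trans[OF L_le INF_translate_le[of p h T, OF p dom, of x 0]]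
    by (simp add: linear_0[OF T] linear_0[OF h])
  moreover have upper: "L (T c) \<le> h c" for c
    using order_trans[OF L_le INF_translate_le[of p h T, OF p dom, of "T c" "- c"]]
    by (simp add: linear_neg[OF T] linear_neg[OF h] sublinear_zero[OF p])
  moreover have "h c \<le> L (T c)" for c
    using upper[of "- c"] by (simp add: linear_neg[OF T] linear_neg[OF h] linear_neg[OF L])
  ultimately show thesis
    using that L by (meson order_antisym)
qed

text \<open>Families \<open>(w\<^sub>i)\<^sub>i\<close> of vectors, as functions \<open>'i \<Rightarrow> 'a\<close>, form the space on which
  Hahn--Banach is applied below.\<close>

instantiation "fun" :: (type, real_vector) real_vector
begin

definition scaleR_fun :: "real \<Rightarrow> ('a \<Rightarrow> 'b) \<Rightarrow> 'a \<Rightarrow> 'b" where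
  "scaleR_fun r f = (\<lambda>x. r *\<^sub>R f x)"

instance
  by standard (simp_all add: scaleR_fun_def fun_eq_iff scaleR_add_right scaleR_add_left)

end

lemma scaleR_fun_apply [simp]: "(r *\<^sub>R f) x = r *\<^sub>R f x"
  by (simp add: scaleR_fun_def)

lemma sum_fun_apply: "(\<Sum>i\<in>I. f i) x = (\<Sum>i\<in>I. f i x)"
  by (induction I rule: infinite_finite_induct) auto

lemma linear_eq_sum_coordinates:
  fixes L :: "('i \<Rightarrow> 'a::real_normed_vector) \<Rightarrow> real"
  assumes L: "linear L" and I: "finite I" and bound: "\<And>w. L w \<le> K * (\<Sum>i\<in>I. norm (w i))"
  shows "L w = (\<Sum>i\<in>I. L (\<lambda>j. if j = i then w i else 0))"
proof -
  define t where "t = (\<lambda>j. if j \<in> I then 0 else w j)"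
  have "L t \<le> 0" and "L (- t) \<le> 0"
    using bound[of t] bound[of "- t"] by (simp_all add: t_def)
  then have "L t = 0"
    using linear_neg[OF L, of t] by simp
  have "w = (\<Sum>i\<in>I. (\<lambda>j. if j = i then w i else 0)) + t"
    using I by (simp add: fun_eq_iff sum_fun_apply t_def)
  then have "L w = L ((\<Sum>i\<in>I. (\<lambda>j. if j = i then w i else 0)) + t)"
    by (rule arg_cong)
  also have "\<dots> = (\<Sum>i\<in>I. L (\<lambda>j. if j = i then w i else 0)) + L t"
    by (simp only: linear_add[OF L] linear_sum[OF L])
  finally have "L w = (\<Sum>i\<in>I. L (\<lambda>j. if j = i then w i else 0)) + L t" .
  with \<open>L t = 0\<close> show ?thesis by simp
qed

lemma sublinear_sum_norm:
  assumes "0 \<le> K"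
  shows "sublinear (\<lambda>w::'i \<Rightarrow> 'a::real_normed_vector. K * (\<Sum>i\<in>I. norm (w i)))"
  unfolding sublinear_def
proof safe
  fix w v :: "'i \<Rightarrow> 'a"
  have "(\<Sum>i\<in>I. norm (w i + v i)) \<le> (\<Sum>i\<in>I. norm (w i)) + (\<Sum>i\<in>I. norm (v i))"
    by (simp add: sum.distrib[symmetric] sum_mono norm_triangle_ineq)
  then show "K * (\<Sum>i\<in>I. norm ((w + v) i)) \<le> K * (\<Sum>i\<in>I. norm (w i)) + K * (\<Sum>i\<in>I. norm (v i))"
    using assms by (simp add: distrib_left[symmetric] mult_left_mono)
qed (simp add: sum_distrib_left algebra_simps)

lemma dominated_coordinate_functional:
  fixes L :: "('i \<Rightarrow> 'a::real_normed_vector) \<Rightarrow> real"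
  assumes L: "linear L" and I: "finite I" and K: "0 \<le> K"
    and bound: "\<And>w. L w \<le> K * (\<Sum>i\<in>I. norm (w i))"
  shows "linear (\<lambda>u. L (\<lambda>j. if j = i then u else 0))"
    and "\<bar>L (\<lambda>j. if j = i then u else 0)\<bar> \<le> K * norm u"
proof -
  have "linear (\<lambda>u. \<lambda>j. if j = i then u else (0::'a))"
    by (intro linearI) (simp_all add: fun_eq_iff)
  from linear_compose[OF this L] show lin: "linear (\<lambda>u. L (\<lambda>j. if j = i then u else 0))"
    by (simp add: o_def)
  have le: "L (\<lambda>j. if j = i then u else 0) \<le> K * norm u" for u
  proof -
    have "(\<Sum>j\<in>I. norm (if j = i then u else 0)) = (\<Sum>j\<in>I. if j = i then norm u else 0)"
      by (rule sum.cong) auto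
    also have "\<dots> \<le> norm u"
      using I by (simp add: sum.delta)
    finally show ?thesis
      using bound[of "\<lambda>j. if j = i then u else 0"] K by (meson mult_left_mono order_trans)
  qed
  show "\<bar>L (\<lambda>j. if j = i then u else 0)\<bar> \<le> K * norm u"
    using le[of u] le[of "- u"] linear_neg[OF lin, of u] by simp
qed

section \<open>Complex structure and complex-linear functionals\<close>

definition cscale :: "('a::real_vector \<Rightarrow> 'a) \<Rightarrow> complex \<Rightarrow> 'a \<Rightarrow> 'a" where
  "cscale J z u = Re z *\<^sub>R u + Im z *\<^sub>R J u"

lemma cdual_cscale: "cdual J f \<Longrightarrow> f (cscale J z u) = z * f u"
proof -
  assume f: "cdual J f"
  then have "linear f" and f_J: "\<And>x. f (J x) = \<i> * f x"
    unfolding cdual_def using bounded_linear.linear by blast+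
  then have "f (cscale J z u) = of_real (Re z) * f u + of_real (Im z) * (\<i> * f u)"
    unfolding cscale_def by (simp add: linear_add linear_scale scaleR_conv_of_real)
  also have "\<dots> = z * f u"
    by (subst (3) complex_eq) (simp add: algebra_simps)
  finally show ?thesis .
qed

lemma cbil_cscale_left: "cbil J B \<Longrightarrow> B (cscale J z w) v = z * B w v"
proof -
  assume "cbil J B"
  then have B: "bounded_bilinear B" and B_J: "\<And>x y. B (J x) y = \<i> * B x y"
    unfolding cbil_def by auto
  have "B (cscale J z w) v = of_real (Re z) * B w v + of_real (Im z) * (\<i> * B w v)"
    unfolding cscale_def
    by (simp add: bounded_bilinear.add_left[OF B] bounded_bilinear.scaleR_left[OF B] B_J
        scaleR_conv_of_real)
  also have "\<dots> = z * B w v"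
    by (subst (3) complex_eq) (simp add: algebra_simps)
  finally show ?thesis .
qed

lemma cdual_Im: "cdual J f \<Longrightarrow> Im (f u) = - Re (f (J u))"
  by (simp add: cdual_def)

lemma cdual_zero: "cdual J (\<lambda>u. 0)"
  by (simp add: cdual_def bounded_linear_zero)

lemma cdual_add: "cdual J f \<Longrightarrow> cdual J g \<Longrightarrow> cdual J (\<lambda>u. f u + g u)"
  unfolding cdual_def by (auto intro: bounded_linear_add simp: distrib_left)

lemma cdual_mult: "cdual J f \<Longrightarrow> cdual J (\<lambda>u. z * f u)"
  unfolding cdual_def by (auto intro: bounded_linear_compose[OF bounded_linear_mult_right])

lemma cdual_sum: "(\<And>i. i \<in> I \<Longrightarrow> cdual J (f i)) \<Longrightarrow> cdual J (\<lambda>u. \<Sum>i\<in>I. f i u)"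
  by (induction I rule: infinite_finite_induct) (auto intro: cdual_zero cdual_add)

lemma cbil_cdual_product: "cdual J f \<Longrightarrow> cdual J g \<Longrightarrow> cbil J (\<lambda>u v. f u * g v)"
  unfolding cdual_def cbil_def by (auto intro: bounded_bilinear.comp[OF bounded_bilinear_mult])

context
  fixes J :: "'a::{real_normed_algebra,banach} \<Rightarrow> 'a"
  assumes J: "complex_structure J"
begin

lemma J_linear: "linear J"
  using J by (simp add: complex_structure_def)

lemma J_J: "J (J x) = - x"
  using J by (simp add: complex_structure_def)

lemma J_mult_left: "J (x * y) = J x * y"
  using J unfolding complex_structure_def by blast

lemma J_mult_right: "J (x * y) = x * J y"
  using J unfolding complex_structure_def by blast

lemma norm_rotate_J: "norm (cos t *\<^sub>R x + sin t *\<^sub>R J x) = norm x"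
  using J by (simp add: complex_structure_def)

lemma norm_J: "norm (J x) = norm x"
  using norm_rotate_J[of "pi / 2" x] by simp

lemma norm_cscale: "norm (cscale J z u) = cmod z * norm u"
proof (cases "z = 0")
  case True
  then show ?thesis by (simp add: cscale_def)
next
  case False
  then have "cscale J z u = cmod z *\<^sub>R (cos (Arg z) *\<^sub>R u + sin (Arg z) *\<^sub>R J u)"
    using cos_Arg[OF False] sin_Arg[OF False] by (simp add: cscale_def scaleR_add_right)
  then show ?thesis by (simp add: norm_rotate_J)
qed

lemma cscale_commute:
  assumes "linear D" and "\<And>x. D (J x) = J (D x)"
  shows "D (cscale J z x) = cscale J z (D x)"
  using assms by (simp add: cscale_def linear_add linear_scale)

lemma linear_cscale: "linear (cscale J z)"
  using J_linear by (intro linearI) (simp_all add: cscale_def linear_add linear_scale algebra_simps)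

lemma linear_defect: "linear (\<lambda>c. x * (a * c) - cscale J z (x * c))"
  using linear_cscale
  by (intro linearI) (simp_all add: distrib_left linear_add linear_scale algebra_simps)

lemma defect_J: "x * (a * J c) - cscale J z (x * J c) = J (x * (a * c) - cscale J z (x * c))"
  using J_linear by (simp add: linear_diff J_mult_right cscale_commute)

lemma defect_expand:
  assumes f: "cdual J f"
  shows "f (x * (a * u) - cscale J z (x * u)) = f ((x * a) * u) + (- z) * f (x * u)"
proof -
  have "linear f"
    using f bounded_linear.linear by (auto simp: cdual_def)
  then show ?thesis
    by (simp add: linear_diff cdual_cscale[OF f] mult.assoc)
qed

lemma cdual_mult_left: "cdual J f \<Longrightarrow> cdual J (\<lambda>u. f (y * u))"
  unfolding cdual_def
  by (auto intro: bounded_linear_compose[OF _ bounded_linear_mult_right] simp: J_mult_right[symmetric])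

lemma cdual_defect:
  assumes f: "cdual J f"
  shows "cdual J (\<lambda>u. f (x * (a * u) - cscale J z (x * u)))"
proof -
  have "(\<lambda>u. f (x * (a * u) - cscale J z (x * u))) = (\<lambda>u. f ((x * a) * u) + (- z) * f (x * u))"
    by (rule ext) (rule defect_expand[OF f])
  then show ?thesis
    by (simp only:) (intro cdual_add cdual_mult cdual_mult_left f)
qed

lemma cmod_cdual_le_sum_norm:
  assumes \<phi>: "cdual J \<phi>" and D_linear: "\<And>i. linear (D i)" and D_J: "\<And>i u. D i (J u) = J (D i u)"
    and I: "finite I" and \<epsilon>: "0 < \<epsilon>" and far: "\<And>c. \<phi> c = 1 \<Longrightarrow> \<exists>i\<in>I. \<epsilon> \<le> norm (D i c)"
  shows "cmod (\<phi> c) \<le> (1 / \<epsilon>) * (\<Sum>i\<in>I. norm (D i c))"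
proof (cases "\<phi> c = 0")
  case False
  define c' where "c' = cscale J (inverse (\<phi> c)) c"
  have "\<phi> c' = 1"
    using False by (simp add: c'_def cdual_cscale[OF \<phi>])
  then obtain i where "i \<in> I" and "\<epsilon> \<le> norm (D i c')"
    using far by blast
  moreover have "D i c' = cscale J (inverse (\<phi> c)) (D i c)"
    unfolding c'_def using D_linear D_J by (rule cscale_commute)
  ultimately have "\<epsilon> \<le> norm (D i c) / cmod (\<phi> c)"
    by (simp add: norm_cscale norm_inverse divide_inverse mult.commute)
  then have "\<epsilon> * cmod (\<phi> c) \<le> norm (D i c)"
    using False by (simp add: le_divide_eq)
  also have "\<dots> \<le> (\<Sum>i\<in>I. norm (D i c))"
    using I \<open>i \<in> I\<close> by (intro member_le_sum) auto
  finally show ?thesis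
    using \<epsilon> by (simp add: pos_le_divide_eq mult.commute)
qed (use \<epsilon> in \<open>simp add: sum_nonneg\<close>)

lemma cdual_complexify:
  assumes g: "linear g" and bound: "\<And>u. \<bar>g u\<bar> \<le> K * norm u"
  shows "cdual J (\<lambda>u. Complex (g u) (- g (J u)))"
  unfolding cdual_def
proof
  show "bounded_linear (\<lambda>u. Complex (g u) (- g (J u)))"
  proof (rule bounded_linear_intro[where K="2 * K"])
    fix u
    have "cmod (Complex (g u) (- g (J u))) \<le> \<bar>g u\<bar> + \<bar>g (J u)\<bar>"
      using cmod_le[of "Complex (g u) (- g (J u))"] by simp
    also have "\<dots> \<le> K * norm u + K * norm u"
      using bound[of u] bound[of "J u"] by (simp add: norm_J)
    also have "\<dots> = norm u * (2 * K)"
      by simp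
    finally show "norm (Complex (g u) (- g (J u))) \<le> norm u * (2 * K)" .
  qed (use g J_linear in \<open>simp_all add: complex_eq_iff linear_add linear_scale\<close>)
  show "\<forall>u. Complex (g (J u)) (- g (J (J u))) = \<i> * Complex (g u) (- g (J u))"
    using g by (simp add: complex_eq_iff J_J linear_neg)
qed

lemma character_unit:
  assumes "character J \<phi>"
  obtains e where "\<phi> e = 1"
proof -
  obtain x where "\<phi> x \<noteq> 0" and "cdual J \<phi>"
    using assms by (auto simp: character_def)
  then have "\<phi> (cscale J (inverse (\<phi> x)) x) = 1"
    by (simp add: cdual_cscale)
  then show thesis by (rule that)
qed

end

lemma cdual_factorization:
  fixes J :: "'a::{real_normed_algebra,banach} \<Rightarrow> 'a" and D :: "'i \<Rightarrow> 'a \<Rightarrow> 'a"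
  assumes J: "complex_structure J" and \<phi>: "cdual J \<phi>" and I: "finite I"
    and D_linear: "\<And>i. linear (D i)" and D_J: "\<And>i u. D i (J u) = J (D i u)"
    and K: "0 \<le> K" and dom: "\<And>c. cmod (\<phi> c) \<le> K * (\<Sum>i\<in>I. norm (D i c))"
  obtains f where "\<And>i. cdual J (f i)" and "\<And>c. \<phi> c = (\<Sum>i\<in>I. f i (D i c))"
proof -
  \<comment> \<open>Extend \<open>Re \<circ> \<phi>\<close> from the image of \<open>c \<mapsto> (D\<^sub>i c)\<^sub>i\<close>; a complex functional is determined
    by its real part.\<close>
  have T: "linear (\<lambda>c. \<lambda>i. D i c)"
    using D_linear by (intro linearI) (simp_all add: fun_eq_iff linear_add linear_scale)
  have h: "linear (\<lambda>c. Re (\<phi> c))"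
    using \<phi> by (intro linearI) (simp_all add: cdual_def linear_simps)
  have Re_le: "Re (\<phi> c) \<le> K * (\<Sum>i\<in>I. norm (D i c))" for c
    using complex_Re_le_cmod[of "\<phi> c"] dom[of c] by simp
  obtain L where L: "linear L" and L_le: "\<And>w. L w \<le> K * (\<Sum>i\<in>I. norm (w i))"
    and L_Re: "\<And>c. L (\<lambda>i. D i c) = Re (\<phi> c)"
    using hahn_banach_sublinear[where p = "\<lambda>w. K * (\<Sum>i\<in>I. norm (w i))",
        OF sublinear_sum_norm[OF K] T h Re_le] by blast
  define g where "g = (\<lambda>i u. L (\<lambda>j. if j = i then u else 0))"
  have Re_\<phi>: "Re (\<phi> c) = (\<Sum>i\<in>I. g i (D i c))" for c
    using linear_eq_sum_coordinates[OF L I L_le, of "\<lambda>i. D i c"] L_Re by (simp add: g_def)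
  define f where "f = (\<lambda>i u. Complex (g i u) (- g i (J u)))"
  have "cdual J (f i)" for i
    unfolding f_def g_def using J dominated_coordinate_functional[OF L I K L_le] by (rule cdual_complexify)
  moreover have "\<phi> c = (\<Sum>i\<in>I. f i (D i c))" for c
  proof (rule complex_eqI)
    show "Re (\<phi> c) = Re (\<Sum>i\<in>I. f i (D i c))"
      by (simp add: Re_\<phi> Re_sum f_def)
    have "Im (\<phi> c) = - Re (\<phi> (J c))"
      using \<phi> by (rule cdual_Im)
    also have "\<dots> = - (\<Sum>i\<in>I. g i (J (D i c)))"
      by (simp add: Re_\<phi> D_J)
    also have "\<dots> = Im (\<Sum>i\<in>I. f i (D i c))"
      by (simp add: Im_sum f_def sum_negf)
    finally show "Im (\<phi> c) = Im (\<Sum>i\<in>I. f i (D i c))" .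
  qed
  ultimately show thesis
    by (rule that)
qed

section \<open>Elementary tensors and the bidual\<close>

definition tensor :: "'a \<Rightarrow> 'a \<Rightarrow> ('a \<Rightarrow> 'a \<Rightarrow> complex) \<Rightarrow> complex" where
  "tensor w v = (\<lambda>B. B w v)"

lemma cbil_zero: "cbil J (\<lambda>x y. 0)"
  using cbil_cdual_product[OF cdual_zero cdual_zero] by simp

lemma bnorm_zero: "bnorm (\<lambda>x y :: 'a::real_normed_vector. 0 :: complex) = 0"
proof -
  have "bnorm (\<lambda>x y :: 'a. 0 :: complex) = Sup {0}"
    unfolding bnorm_def by (rule arg_cong[where f = Sup]) (auto intro!: exI[of _ 0])
  then show ?thesis by simp
qed

lemma bnorm_bound:
  assumes "cbil J B"
  shows "cmod (B x y) \<le> bnorm B * norm x * norm y"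
proof -
  have B: "bounded_bilinear B"
    using assms by (simp add: cbil_def)
  obtain K where K: "0 < K" "\<And>a b. norm (B a b) \<le> norm a * norm b * K"
    using bounded_bilinear.pos_bounded[OF B] by blast
  define S where "S = {cmod (B x y) | x y. norm x \<le> 1 \<and> norm y \<le> 1}"
  have "bdd_above S"
  proof (rule bdd_aboveI)
    fix s assume "s \<in> S"
    then obtain x y where xy: "s = cmod (B x y)" "norm x \<le> 1" "norm y \<le> 1"
      by (auto simp: S_def)
    then have "norm x * norm y * K \<le> 1 * 1 * K"
      using K(1) by (intro mult_right_mono mult_mono) auto
    then show "s \<le> K"
      using K(2)[of x y] xy(1) by simp
  qed
  show ?thesis
  proof (cases "x = 0 \<or> y = 0")
    case True
    then show ?thesis
      using bounded_bilinear.zero_left[OF B] bounded_bilinear.zero_right[OF B] by auto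
  next
    case False
    then have "norm x > 0" and "norm y > 0" by auto
    have "B (x /\<^sub>R norm x) (y /\<^sub>R norm y) = B x y / (norm x * norm y)"
      by (simp add: bounded_bilinear.scaleR_left[OF B] bounded_bilinear.scaleR_right[OF B]
          scaleR_conv_of_real divide_inverse)
    moreover have "norm (x /\<^sub>R norm x) \<le> 1" and "norm (y /\<^sub>R norm y) \<le> 1"
      using False by simp_all
    then have "cmod (B (x /\<^sub>R norm x) (y /\<^sub>R norm y)) \<in> S"
      unfolding S_def by blast
    then have "cmod (B (x /\<^sub>R norm x) (y /\<^sub>R norm y)) \<le> bnorm B"
      unfolding bnorm_def S_def[symmetric] using \<open>bdd_above S\<close> by (rule cSup_upper)
    ultimately show ?thesis
      using \<open>norm x > 0\<close> \<open>norm y > 0\<close> by (simp add: norm_divide norm_mult divide_le_eq mult.assoc)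
  qed
qed

lemma tnorm_le:
  assumes bound: "\<And>B. cbil J B \<Longrightarrow> cmod (u B) \<le> M * bnorm B" and M: "0 \<le> M"
  shows "0 \<le> tnorm J u" and "tnorm J u \<le> M"
proof -
  define S where "S = {cmod (u B) | B. cbil J B \<and> bnorm B \<le> 1}"
  have S_le: "s \<le> M" if s: "s \<in> S" for s
  proof -
    obtain B where "s = cmod (u B)" "cbil J B" "bnorm B \<le> 1"
      using s unfolding S_def by blast
    then show ?thesis
      using bound[of B] mult_left_mono[of "bnorm B" 1 M] M by simp
  qed
  have zero_in_S: "cmod (u (\<lambda>x y. 0)) \<in> S"
    unfolding S_def by (rule CollectI, rule exI[of _ "\<lambda>x y. 0"]) (simp add: cbil_zero bnorm_zero)
  show "tnorm J u \<le> M"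
    unfolding tnorm_def S_def[symmetric] using zero_in_S S_le by (intro cSup_least) auto
  have "cmod (u (\<lambda>x y. 0)) \<le> tnorm J u"
    unfolding tnorm_def S_def[symmetric] using zero_in_S S_le by (intro cSup_upper bdd_aboveI)
  then show "0 \<le> tnorm J u"
    using norm_ge_zero order_trans by blast
qed

lemma tnorm_zero: "tnorm J (\<lambda>B. 0) = 0"
  using tnorm_le[of J "\<lambda>B. 0" 0] by simp

lemma tnorm_cong: "(\<And>B. cbil J B \<Longrightarrow> u B = u' B) \<Longrightarrow> tnorm J u = tnorm J u'"
  unfolding tnorm_def by (metis (no_types, lifting))

lemma tnorm_tensor: "0 \<le> tnorm J (tensor w v)" "tnorm J (tensor w v) \<le> norm w * norm v"
  using tnorm_le[of J "tensor w v" "norm w * norm v"] bnorm_bound[of J _ w v]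
  by (simp_all add: tensor_def mult_ac)

lemma ptensor_tensor: "ptensor J (tensor w v)"
  unfolding ptensor_def
proof (intro exI conjI allI impI)
  define a where "a = (\<lambda>n::nat. if n = 0 then w else 0)"
  define b where "b = (\<lambda>n::nat. if n = 0 then v else 0)"
  show "summable (\<lambda>n. norm (a n) * norm (b n))"
    by (rule summable_finite[of "{0}"]) (auto simp: a_def b_def)
  fix B assume "cbil J B"
  then have "bounded_bilinear B" by (simp add: cbil_def)
  then have "(\<lambda>n. B (a n) (b n)) sums B w v"
    using sums_single[of 0 "\<lambda>_. B w v"]
    by (simp add: a_def b_def if_distrib bounded_bilinear.zero_left cong: if_cong)
  then show "tensor w v B = (\<Sum>n. B (a n) (b n))"
    by (simp add: tensor_def sums_iff)
qed

lemma lact_tensor: "lact a (tensor w v) = tensor (a * w) v"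
  by (simp add: lact_def tensor_def)

lemma tnorm_tensor_mult_le: "tnorm J (tensor (x * c) v) \<le> (norm c * norm v) * norm x"
proof -
  have "tnorm J (tensor (x * c) v) \<le> norm (x * c) * norm v"
    by (rule tnorm_tensor(2))
  also have "\<dots> \<le> (norm x * norm c) * norm v"
    by (intro mult_right_mono norm_mult_ineq) simp
  finally show ?thesis
    by (simp add: mult_ac)
qed

lemma tnorm_tensor_diff_cscale:
  "tnorm J (\<lambda>B. tensor w v B - z * tensor w' v B) = tnorm J (tensor (w - cscale J z w') v)"
proof (rule tnorm_cong)
  fix B assume B: "cbil J B"
  then have "bounded_bilinear B" by (simp add: cbil_def)
  with B show "tensor w v B - z * tensor w' v B = tensor (w - cscale J z w') v B"
    by (simp add: tensor_def cbil_cscale_left bounded_bilinear.diff_left)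
qed

lemma clin_map_tensor:
  assumes J: "complex_structure J"
  shows "clin_map J (\<lambda>x. tensor (x * c) v)"
  unfolding clin_map_def tensor_def
proof (intro allI impI conjI)
  fix B assume "cbil J B"
  then have B: "bounded_bilinear B" and B_J: "\<And>x y. B (J x) y = \<i> * B x y"
    by (auto simp: cbil_def)
  show "B ((x + y) * c) v = B (x * c) v + B (y * c) v" for x y
    by (simp add: distrib_right bounded_bilinear.add_left[OF B])
  show "B ((r *\<^sub>R x) * c) v = of_real r * B (x * c) v" for r x
    by (simp add: bounded_bilinear.scaleR_left[OF B] scaleR_conv_of_real)
  show "B (J x * c) v = \<i> * B (x * c) v" for x
    by (simp add: J_mult_left[OF J, symmetric] B_J)
qed

lemma bidual_product_add:
  assumes F: "bidual J F" and f: "cdual J f" "cdual J f'" and g: "cdual J g"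
  shows "F (\<lambda>u v. (f u + f' u) * g v) = F (\<lambda>u v. f u * g v) + F (\<lambda>u v. f' u * g v)"
proof -
  have "(\<lambda>u v. (f u + f' u) * g v) = (\<lambda>u v. f u * g v + f' u * g v)"
    by (simp add: fun_eq_iff distrib_right)
  then show ?thesis
    using F cbil_cdual_product[OF f(1) g] cbil_cdual_product[OF f(2) g] by (simp add: bidual_def)
qed

lemma bidual_product_mult:
  assumes F: "bidual J F" and f: "cdual J f" and g: "cdual J g"
  shows "F (\<lambda>u v. (z * f u) * g v) = z * F (\<lambda>u v. f u * g v)"
proof -
  have "(\<lambda>u v. (z * f u) * g v) = (\<lambda>u v. z * (f u * g v))"
    by (simp add: fun_eq_iff mult.assoc)
  then show ?thesis
    using F cbil_cdual_product[OF f g] by (simp add: bidual_def)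
qed

lemma bidual_product_sum:
  assumes F: "bidual J F" and f: "\<And>i. i \<in> I \<Longrightarrow> cdual J (f i)" and g: "cdual J g"
  shows "F (\<lambda>u v. (\<Sum>i\<in>I. f i u) * g v) = (\<Sum>i\<in>I. F (\<lambda>u v. f i u * g v))"
  using f
proof (induction I rule: infinite_finite_induct)
  case empty
  show ?case
    using bidual_product_mult[OF F g g, of 0] by simp
next
  case (insert i I)
  then show ?case
    by (simp add: bidual_product_add[OF F _ cdual_sum g])
qed (use bidual_product_mult[OF F g g, of 0] in simp)

section \<open>Biflat algebras have approximate \<open>\<phi>\<close>-units\<close>

lemma biflatE:
  assumes "biflat J"
  obtains \<rho> where "\<And>x. bidual J (\<rho> x)"
    and "\<And>a x B. cbil J B \<Longrightarrow> \<rho> (a * x) B = lact a (\<rho> x) B"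
    and "\<And>a x B. cbil J B \<Longrightarrow> \<rho> (x * a) B = ract (\<rho> x) a B"
    and "\<And>a f. cdual J f \<Longrightarrow> \<rho> a (\<lambda>x y. f (x * y)) = f a"
proof -
  obtain \<rho> where "(\<forall>x. bidual J (\<rho> x))
      \<and> (\<forall>a x B. cbil J B \<longrightarrow> \<rho> (a * x) B = lact a (\<rho> x) B)
      \<and> (\<forall>a x B. cbil J B \<longrightarrow> \<rho> (x * a) B = ract (\<rho> x) a B)
      \<and> (\<forall>a f. cdual J f \<longrightarrow> \<rho> a (\<lambda>x y. f (x * y)) = f a)"
    using assms unfolding biflat_def by blast
  then show thesis
    using that by blast
qed

locale biflat_character =
  fixes J :: "'a::{real_normed_algebra,banach} \<Rightarrow> 'a" and \<phi> :: "'a \<Rightarrow> complex"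
    and \<rho> :: "'a \<Rightarrow> ('a \<Rightarrow> 'a \<Rightarrow> complex) \<Rightarrow> complex" and e :: 'a
  assumes J: "complex_structure J" and \<phi>: "character J \<phi>"
    and \<rho>_bidual: "\<And>x. bidual J (\<rho> x)"
    and \<rho>_left: "\<And>a x B. cbil J B \<Longrightarrow> \<rho> (a * x) B = lact a (\<rho> x) B"
    and \<rho>_right: "\<And>a x B. cbil J B \<Longrightarrow> \<rho> (x * a) B = ract (\<rho> x) a B"
    and \<rho>_diagonal: "\<And>a f. cdual J f \<Longrightarrow> \<rho> a (\<lambda>x y. f (x * y)) = f a"
    and \<phi>_e: "\<phi> e = 1"
begin

lemma \<phi>_cdual: "cdual J \<phi>"
  using \<phi> by (simp add: character_def)

lemma \<phi>_mult: "\<phi> (x * y) = \<phi> x * \<phi> y"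
  using \<phi> by (simp add: character_def)

lemma \<rho>_e_\<phi>_product: "\<rho> e (\<lambda>u v. \<phi> u * \<phi> v) = 1"
  using \<rho>_diagonal[OF \<phi>_cdual, of e] by (simp add: \<phi>_mult \<phi>_e)

lemma \<rho>_e_shift:
  assumes f: "cdual J f"
  shows "\<rho> e (\<lambda>u v. f (y * u) * \<phi> v) = \<rho> y (\<lambda>u v. f u * \<phi> v)"
proof -
  have B: "cbil J (\<lambda>u v. f u * \<phi> v)"
    using f \<phi>_cdual by (rule cbil_cdual_product)
  have "\<rho> e (\<lambda>u v. f (y * u) * \<phi> v) = \<rho> (y * e) (\<lambda>u v. f u * \<phi> v)"
    using \<rho>_left[OF B] by (simp add: lact_def)
  also have "\<dots> = \<rho> y (\<lambda>u v. f u * \<phi> v)"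
    using \<rho>_right[OF B] by (simp add: ract_def \<phi>_mult \<phi>_e)
  finally show ?thesis .
qed

lemma \<rho>_right_\<phi>:
  assumes f: "cdual J f"
  shows "\<rho> (x * a) (\<lambda>u v. f u * \<phi> v) = \<phi> a * \<rho> x (\<lambda>u v. f u * \<phi> v)"
proof -
  have "\<rho> (x * a) (\<lambda>u v. f u * \<phi> v) = \<rho> x (\<lambda>u v. (\<phi> a * f u) * \<phi> v)"
    using \<rho>_right[OF cbil_cdual_product[OF f \<phi>_cdual]] by (simp add: ract_def \<phi>_mult mult_ac)
  also have "\<dots> = \<phi> a * \<rho> x (\<lambda>u v. f u * \<phi> v)"
    using \<rho>_bidual f \<phi>_cdual by (rule bidual_product_mult)
  finally show ?thesis .
qed

lemma \<rho>_e_defect: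
  assumes f: "cdual J f"
  shows "\<rho> e (\<lambda>u v. f (x * (a * u) - cscale J (\<phi> a) (x * u)) * \<phi> v) = 0"
proof -
  have "\<rho> e (\<lambda>u v. f (x * (a * u) - cscale J (\<phi> a) (x * u)) * \<phi> v)
      = \<rho> e (\<lambda>u v. (f ((x * a) * u) + (- \<phi> a) * f (x * u)) * \<phi> v)"
    by (simp only: defect_expand[OF J f])
  also have "\<dots> = \<rho> e (\<lambda>u v. f ((x * a) * u) * \<phi> v) + \<rho> e (\<lambda>u v. ((- \<phi> a) * f (x * u)) * \<phi> v)"
    by (rule bidual_product_add[OF \<rho>_bidual cdual_mult_left[OF J f]
          cdual_mult[OF cdual_mult_left[OF J f]] \<phi>_cdual])
  also have "\<dots> = \<rho> e (\<lambda>u v. f ((x * a) * u) * \<phi> v) + (- \<phi> a) * \<rho> e (\<lambda>u v. f (x * u) * \<phi> v)"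
    by (simp only: bidual_product_mult[OF \<rho>_bidual cdual_mult_left[OF J f] \<phi>_cdual])
  also have "\<dots> = 0"
    by (simp add: \<rho>_e_shift[OF f] \<rho>_right_\<phi>[OF f])
  finally show ?thesis .
qed

lemma \<phi>_not_sum_of_defects:
  assumes "\<And>i. cdual J (f i)"
  shows "\<exists>c. \<phi> c \<noteq> (\<Sum>i\<in>I. f i (x i * (a i * c) - cscale J (\<phi> (a i)) (x i * c)))"
proof (rule ccontr)
  assume "\<not> ?thesis"
  then have \<phi>_eq: "\<phi> u = (\<Sum>i\<in>I. f i (x i * (a i * u) - cscale J (\<phi> (a i)) (x i * u)))" for u
    by blast
  have "1 = \<rho> e (\<lambda>u v. \<phi> u * \<phi> v)"
    by (rule \<rho>_e_\<phi>_product[symmetric])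
  also have "(\<lambda>u v. \<phi> u * \<phi> v)
      = (\<lambda>u v. (\<Sum>i\<in>I. f i (x i * (a i * u) - cscale J (\<phi> (a i)) (x i * u))) * \<phi> v)"
    by (intro ext) (simp only: \<phi>_eq[symmetric])
  also have "\<rho> e \<dots> = (\<Sum>i\<in>I. \<rho> e (\<lambda>u v. f i (x i * (a i * u) - cscale J (\<phi> (a i)) (x i * u)) * \<phi> v))"
    using \<rho>_bidual cdual_defect[OF J assms] \<phi>_cdual by (rule bidual_product_sum)
  also have "\<dots> = 0"
    by (simp add: \<rho>_e_defect assms)
  finally show False by simp
qed

end

lemma biflat_approximate_unit:
  fixes J :: "'a::{real_normed_algebra,banach} \<Rightarrow> 'a" and \<phi> :: "'a \<Rightarrow> complex"
    and x a :: "'i \<Rightarrow> 'a"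
  assumes J: "complex_structure J" and BF: "biflat J" and \<phi>: "character J \<phi>"
    and I: "finite I" and \<epsilon>: "0 < \<epsilon>"
  shows "\<exists>c. (\<forall>i\<in>I. norm (x i * (a i * c) - cscale J (\<phi> (a i)) (x i * c)) < \<epsilon>)
    \<and> cmod (\<phi> c - 1) < \<epsilon>"
proof (rule ccontr)
  define D where "D = (\<lambda>i c. x i * (a i * c) - cscale J (\<phi> (a i)) (x i * c))"
  assume no_unit: "\<not> ?thesis"
  have far: "\<exists>i\<in>I. \<epsilon> \<le> norm (D i c)" if "\<phi> c = 1" for c
  proof -
    have "\<not> (\<forall>i\<in>I. norm (D i c) < \<epsilon>)"
      using no_unit that \<epsilon> unfolding D_def by auto
    then show ?thesis
      by (auto simp: not_less)
  qed
  have \<phi>_cdual: "cdual J \<phi>"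
    using \<phi> by (simp add: character_def)
  have D_linear: "linear (D i)" and D_J: "D i (J u) = J (D i u)" for i u
    unfolding D_def using J by (rule linear_defect, rule defect_J)
  have "cmod (\<phi> c) \<le> (1 / \<epsilon>) * (\<Sum>i\<in>I. norm (D i c))" for c
    using J \<phi>_cdual D_linear D_J I \<epsilon> far by (rule cmod_cdual_le_sum_norm)
  moreover have "0 \<le> 1 / \<epsilon>"
    using \<epsilon> by simp
  ultimately obtain f where f: "\<And>i. cdual J (f i)" and \<phi>_eq: "\<And>c. \<phi> c = (\<Sum>i\<in>I. f i (D i c))"
    using cdual_factorization[where D = D, OF J \<phi>_cdual I D_linear D_J] by blast
  obtain \<rho> where "\<And>x. bidual J (\<rho> x)"
    and "\<And>a x B. cbil J B \<Longrightarrow> \<rho> (a * x) B = lact a (\<rho> x) B"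
    and "\<And>a x B. cbil J B \<Longrightarrow> \<rho> (x * a) B = ract (\<rho> x) a B"
    and "\<And>a g. cdual J g \<Longrightarrow> \<rho> a (\<lambda>x y. g (x * y)) = g a"
    using biflatE[OF BF] by blast
  moreover obtain e where "\<phi> e = 1"
    using J \<phi> by (rule character_unit)
  ultimately interpret biflat_character J \<phi> \<rho> e
    using J \<phi> by unfold_locales
  obtain c where "\<phi> c \<noteq> (\<Sum>i\<in>I. f i (D i c))"
    using \<phi>_not_sum_of_defects[where f = f and I = I and x = x and a = a] f unfolding D_def by blast
  then show False
    using \<phi>_eq by blast
qed

lemma INF_principal_not_bot:
  assumes "\<And>X. X \<subseteq> I \<Longrightarrow> finite X \<Longrightarrow> (\<Inter>i\<in>X. U i) \<noteq> {}"
  shows "(INF i\<in>I. principal (U i)) \<noteq> bot"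
proof (rule INF_filter_not_bot)
  fix X assume "X \<subseteq> I" and "finite X"
  then show "(INF i\<in>X. principal (U i)) \<noteq> bot"
    using assms by (simp add: INF_principal_finite principal_eq_bot_iff)
qed

lemma biflat_approximate_unit_net:
  fixes J :: "'a::{real_normed_algebra,banach} \<Rightarrow> 'a" and \<phi> :: "'a \<Rightarrow> complex"
  assumes J: "complex_structure J" and BF: "biflat J" and \<phi>: "character J \<phi>"
  obtains G :: "'a filter" where "G \<noteq> bot"
    and "\<And>x a. ((\<lambda>c. x * (a * c) - cscale J (\<phi> a) (x * c)) \<longlongrightarrow> 0) G"
    and "(\<phi> \<longlongrightarrow> 1) G"
proof -
  define U where "U = (\<lambda>(x, a, \<delta>).
    {c. norm (x * (a * c) - cscale J (\<phi> a) (x * c)) < \<delta> \<and> cmod (\<phi> c - 1) < \<delta>})"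
  define G where "G = (INF i\<in>UNIV \<times> UNIV \<times> {0<..}. principal (U i))"
  have eventually_U: "eventually (\<lambda>c. c \<in> U (x, a, \<delta>)) G" if "0 < \<delta>" for x a \<delta>
    unfolding G_def using that by (intro eventually_INF1[of "(x, a, \<delta>)"]) (auto simp: eventually_principal)
  have "G \<noteq> bot"
    unfolding G_def
  proof (rule INF_principal_not_bot)
    fix X :: "('a \<times> 'a \<times> real) set"
    assume X: "X \<subseteq> UNIV \<times> UNIV \<times> {0<..}" "finite X"
    define \<delta> where "\<delta> = Min (insert 1 (snd ` snd ` X))"
    have "0 < \<delta>"
      using X by (auto simp: \<delta>_def)
    then obtain c where
      "\<forall>i\<in>X. norm (fst i * (fst (snd i) * c) - cscale J (\<phi> (fst (snd i))) (fst i * c)) < \<delta>"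
      and "cmod (\<phi> c - 1) < \<delta>"
      using biflat_approximate_unit[OF J BF \<phi> X(2), of \<delta> fst "\<lambda>i. fst (snd i)"] by blast
    moreover have "\<delta> \<le> \<epsilon>" if "(x, a, \<epsilon>) \<in> X" for x a \<epsilon>
      using X(2) that by (auto simp: \<delta>_def intro!: Min_le rev_image_eqI)
    ultimately have "c \<in> U i" if "i \<in> X" for i
      using that by (fastforce simp: U_def)
    then show "(\<Inter>i\<in>X. U i) \<noteq> {}"
      by blast
  qed
  moreover have "((\<lambda>c. x * (a * c) - cscale J (\<phi> a) (x * c)) \<longlongrightarrow> 0) G" for x a
  proof (rule tendstoI)
    fix \<epsilon> :: real assume "0 < \<epsilon>"
    show "\<forall>\<^sub>F c in G. dist (x * (a * c) - cscale J (\<phi> a) (x * c)) 0 < \<epsilon>"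
      using eventually_U[OF \<open>0 < \<epsilon>\<close>, of x a] by (rule eventually_mono) (simp add: U_def)
  qed
  moreover have "(\<phi> \<longlongrightarrow> 1) G"
  proof (rule tendstoI)
    fix \<epsilon> :: real assume "0 < \<epsilon>"
    show "\<forall>\<^sub>F c in G. dist (\<phi> c) 1 < \<epsilon>"
      using eventually_U[OF \<open>0 < \<epsilon>\<close>, of 0 0] by (rule eventually_mono) (simp add: U_def dist_norm)
  qed
  ultimately show thesis
    by (rule that)
qed

lemma approx_left_phi_biprojectiveI:
  fixes J :: "'a::{real_normed_algebra,banach} \<Rightarrow> 'a" and \<phi> :: "'a \<Rightarrow> complex"
    and G :: "'a filter"
  assumes J: "complex_structure J" and \<phi>: "character J \<phi>" and e: "\<phi> e = 1" and G: "G \<noteq> bot"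
    and defect: "\<And>x a. ((\<lambda>c. x * (a * c) - cscale J (\<phi> a) (x * c)) \<longlongrightarrow> 0) G"
    and unit: "(\<phi> \<longlongrightarrow> 1) G"
  shows "approx_left_phi_biprojective J \<phi>"
  unfolding approx_left_phi_biprojective_def
proof (intro exI[of _ "filtermap (\<lambda>c x. tensor (x * c) e) G"] conjI allI)
  show "filtermap (\<lambda>c x. tensor (x * c) e) G \<noteq> bot"
    using G by (simp add: filtermap_bot_iff)
  then show "\<forall>\<^sub>F \<rho> in filtermap (\<lambda>c x. tensor (x * c) e) G. clin_map J \<rho> \<and> (\<forall>x. ptensor J (\<rho> x))
      \<and> (\<exists>K. \<forall>x. tnorm J (\<rho> x) \<le> K * norm x)"
    unfolding eventually_filtermap
    using tnorm_tensor_mult_le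
    by (intro always_eventually allI conjI clin_map_tensor[OF J] ptensor_tensor) blast
next
  fix a x
  show "((\<lambda>\<rho>. tnorm J (\<lambda>B. lact a (\<rho> x) B - \<rho> (a * x) B)) \<longlongrightarrow> 0)
      (filtermap (\<lambda>c x. tensor (x * c) e) G)"
    by (simp add: filterlim_filtermap lact_tensor mult.assoc tnorm_zero)
next
  fix a x
  have "((\<lambda>c. tnorm J (\<lambda>B. tensor ((x * a) * c) e B - \<phi> a * tensor (x * c) e B)) \<longlongrightarrow> 0) G"
  proof (rule Lim_null_comparison)
    have "tnorm J (\<lambda>B. tensor ((x * a) * c) e B - \<phi> a * tensor (x * c) e B)
        = tnorm J (tensor (x * (a * c) - cscale J (\<phi> a) (x * c)) e)" for c
      by (simp only: tnorm_tensor_diff_cscale mult.assoc)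
    then show "\<forall>\<^sub>F c in G. norm (tnorm J (\<lambda>B. tensor ((x * a) * c) e B - \<phi> a * tensor (x * c) e B))
        \<le> norm (x * (a * c) - cscale J (\<phi> a) (x * c)) * norm e"
      by (intro always_eventually allI) (simp add: tnorm_tensor)
    show "((\<lambda>c. norm (x * (a * c) - cscale J (\<phi> a) (x * c)) * norm e) \<longlongrightarrow> 0) G"
      using defect[of x a] by (intro tendsto_mult_left_zero tendsto_norm_zero)
  qed
  then show "((\<lambda>\<rho>. tnorm J (\<lambda>B. \<rho> (x * a) B - \<phi> a * \<rho> x B)) \<longlongrightarrow> 0)
      (filtermap (\<lambda>c x. tensor (x * c) e) G)"
    by (simp add: filterlim_filtermap)
next
  fix x
  have "tensor (x * c) e (\<lambda>u v. \<phi> (u * v)) - \<phi> x = \<phi> x * (\<phi> c - 1)" for c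
    using \<phi> e by (simp add: tensor_def character_def algebra_simps)
  moreover have "((\<lambda>c. \<phi> x * (\<phi> c - 1)) \<longlongrightarrow> 0) G"
    using unit by (auto intro!: tendsto_eq_intros)
  ultimately show "((\<lambda>\<rho>. \<rho> x (\<lambda>u v. \<phi> (u * v)) - \<phi> x) \<longlongrightarrow> 0)
      (filtermap (\<lambda>c x. tensor (x * c) e) G)"
    by (simp add: filterlim_filtermap)
qed

theorem corollary2p7:
  fixes J :: "'a::{real_normed_algebra,banach} \<Rightarrow> 'a" and \<phi> :: "'a \<Rightarrow> complex"
  assumes "complex_structure J"
    and "biflat J"
    and "character J \<phi>"
  shows "approx_left_phi_biprojective J \<phi>"
proof -
  obtain e where "\<phi> e = 1"
    using assms(1,3) by (rule character_unit)
  moreover obtain G where "G \<noteq> bot"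
    and "\<And>x a. ((\<lambda>c. x * (a * c) - cscale J (\<phi> a) (x * c)) \<longlongrightarrow> 0) G"
    and "(\<phi> \<longlongrightarrow> 1) G"
    using biflat_approximate_unit_net[OF assms] by blast
  ultimately show ?thesis
    using assms(1,3) by (intro approx_left_phi_biprojectiveI)
qed

end
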